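(* Let $q\ge 2$ be a prime power and let $n\ge 6$ be divisible by $3$. Then every $3$-spread of $\mathbb{F}_q^n$ is a completely regular code in the Grassmann graph $J_q(n,3)$ with covering radius $2$.
   Context: The Grassmann graph $J_q(n,k)$ has as vertices the $k$-dimensional subspaces of $\mathbb{F}_q^n$, adjacent iff they meet in a $(k-1)$-dimensional subspace. A $3$-spread is a set of $3$-dimensional subspaces of $\mathbb{F}_q^n$ such that every nonzero vector lies in exactly one of them. For a nonempty vertex set $C$ of a connected regular graph, $C_i$ denotes the set of vertices at distance exactly $i$ from $C$, the covering radius $\rho$ is the largest $i$ with $C_i\ne\emptyset$, and $C$ is completely regular if there are numbers $\gamma_i,\alpha_i,\beta_i$ such that every vertex of $C_i$ has exactly $\gamma_i$ neighbours in $C_{i-1}$, $\alpha_i$ in $C_i$ and $\beta_i$ in $C_{i+1}$, for all $i$. *)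

theory Defs
  imports "HOL-Analysis.Analysis"
begin

text \<open>Subspaces of F_q^n, with F_q a finite field type 'a and n = CARD('n).\<close>

definition ksubspaces :: "nat \<Rightarrow> ('a::field ^ 'n::finite) set set" where
  "ksubspaces k = {U. vec.subspace U \<and> vec.dim U = k}"

definition grassmann_adj :: "nat \<Rightarrow> ('a::field ^ 'n::finite) set \<Rightarrow> ('a ^ 'n) set \<Rightarrow> bool" where
  "grassmann_adj k U W \<longleftrightarrow> U \<in> ksubspaces k \<and> W \<in> ksubspaces k \<and> vec.dim (U \<inter> W) = k - 1"

definition spread3 :: "('a::field ^ 'n::finite) set set \<Rightarrow> bool" where
  "spread3 S \<longleftrightarrow> S \<subseteq> ksubspaces 3 \<and> (\<forall>x. x \<noteq> 0 \<longrightarrow> (\<exists>!U. U \<in> S \<and> x \<in> U))"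

fun ball_set :: "'v set \<Rightarrow> ('v \<Rightarrow> 'v \<Rightarrow> bool) \<Rightarrow> 'v set \<Rightarrow> nat \<Rightarrow> 'v set" where
  "ball_set V E C 0 = C \<inter> V"
| "ball_set V E C (Suc i) = ball_set V E C i \<union> {y \<in> V. \<exists>x \<in> ball_set V E C i. E x y}"

fun layer :: "'v set \<Rightarrow> ('v \<Rightarrow> 'v \<Rightarrow> bool) \<Rightarrow> 'v set \<Rightarrow> nat \<Rightarrow> 'v set" where
  "layer V E C 0 = C \<inter> V"
| "layer V E C (Suc i) = ball_set V E C (Suc i) - ball_set V E C i"

definition covering_radius :: "'v set \<Rightarrow> ('v \<Rightarrow> 'v \<Rightarrow> bool) \<Rightarrow> 'v set \<Rightarrow> nat" where
  "covering_radius V E C = (GREATEST i. layer V E C i \<noteq> {})"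

definition completely_regular :: "'v set \<Rightarrow> ('v \<Rightarrow> 'v \<Rightarrow> bool) \<Rightarrow> 'v set \<Rightarrow> bool" where
  "completely_regular V E C \<longleftrightarrow>
     (\<exists>\<gamma> \<alpha> \<beta> :: nat \<Rightarrow> nat. \<forall>i. \<forall>x \<in> layer V E C i.
        card {y \<in> V. E x y \<and> 0 < i \<and> y \<in> layer V E C (i - 1)} = \<gamma> i \<and>
        card {y \<in> V. E x y \<and> y \<in> layer V E C i} = \<alpha> i \<and>
        card {y \<in> V. E x y \<and> y \<in> layer V E C (Suc i)} = \<beta> i)"

end

theory Submission
  imports Defs
begin

text \<open>
  Let C1 be the 3-spaces outside the spread S that meet some spread element in a plane, and C2
  the remaining 3-spaces. Spread elements meet pairwise trivially, so all neighbours of a spread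
  element lie in C1, and a 3-space meets at most one spread element in a plane because two planes
  of a 3-space meet nontrivially. Hence the distance partition is S, C1, C2.

  The neighbours W of a 3-space U are counted by sorting them according to the plane P = U \<inter> W.
  If P lies in no spread element, the neighbours through P in C1 correspond bijectively to the
  pairs (m, Q) of a line m of P and a plane Q through m, not contained in U, in the spread element
  containing m, via W = P + Q. This makes the numbers of neighbours of U in S, C1 and C2 depend
  only on the part containing U. For n \<ge> 6 a 3-space of C1 has more neighbours than lie in S \<union> C1,
  so C2 is nonempty and the covering radius is 2.
\<close>

section \<open>Subspaces of a finite vector space\<close>

lemma card_subspace_eq_power_dim:
  fixes U :: "('a::{field,finite} ^ 'n::finite) set"
  assumes "vec.subspace U"
  shows "card U = CARD('a) ^ vec.dim U"
proof -
  obtain B where B: "B \<subseteq> U" "vec.independent B" "U \<subseteq> vec.span B" "card B = vec.dim U"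
    using vec.basis_exists by blast
  let ?comb = "\<lambda>c. \<Sum>v\<in>B. c v *s v"
  have "?comb ` (B \<rightarrow>\<^sub>E UNIV) = range ?comb"
  proof
    show "range ?comb \<subseteq> ?comb ` (B \<rightarrow>\<^sub>E UNIV)"
    proof
      fix x assume "x \<in> range ?comb"
      then obtain c where "x = ?comb c" by blast
      also have "\<dots> = ?comb (restrict c B)" by (rule sum.cong) auto
      finally show "x \<in> ?comb ` (B \<rightarrow>\<^sub>E UNIV)" by (rule image_eqI[where x="restrict c B"]) simp_all
    qed
  qed auto
  also have "\<dots> = U"
    using vec.span_finite[of B] vec.span_subspace[OF B(1,3) assms] by simp
  finally have image: "?comb ` (B \<rightarrow>\<^sub>E UNIV) = U" .
  have "inj_on ?comb (B \<rightarrow>\<^sub>E UNIV)"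
  proof (rule inj_onI)
    fix c d assume c: "c \<in> B \<rightarrow>\<^sub>E UNIV" and d: "d \<in> B \<rightarrow>\<^sub>E UNIV" and eq: "?comb c = ?comb d"
    have "(\<Sum>v\<in>B. (c v - d v) *s v) = ?comb c - ?comb d"
      by (simp add: vec.scale_left_diff_distrib sum_subtractf)
    then have "(\<Sum>v\<in>B. (c v - d v) *s v) = 0" using eq by simp
    moreover have independent: "\<forall>u. (\<Sum>v\<in>B. u v *s v) = 0 \<longrightarrow> (\<forall>v\<in>B. u v = 0)"
      using B(2) vec.independent_explicit[of B] by blast
    ultimately have "\<forall>v\<in>B. c v - d v = 0" using independent[rule_format, of "\<lambda>v. c v - d v"] by blast
    then show "c = d" using c d by (intro PiE_ext) auto
  qed
  then have "card U = card (B \<rightarrow>\<^sub>E (UNIV :: 'a set))"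
    using card_image image by fastforce
  then show ?thesis using B(4) by (simp add: card_PiE)
qed

definition subspaces_between :: "nat \<Rightarrow> ('a::field ^ 'n::finite) set \<Rightarrow> ('a ^ 'n) set \<Rightarrow> ('a ^ 'n) set set" where
  "subspaces_between k A B = {W. vec.subspace W \<and> vec.dim W = k \<and> A \<subseteq> W \<and> W \<subseteq> B}"

lemma mem_subspaces_between [simp]:
  "W \<in> subspaces_between k A B \<longleftrightarrow> vec.subspace W \<and> vec.dim W = k \<and> A \<subseteq> W \<and> W \<subseteq> B"
  by (simp add: subspaces_between_def)

lemma mem_ksubspaces [simp]: "U \<in> ksubspaces k \<longleftrightarrow> vec.subspace U \<and> vec.dim U = k"
  by (simp add: ksubspaces_def)

lemma dim_span_insert_subspace:
  fixes A :: "('a::field ^ 'n::finite) set"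
  assumes "vec.subspace A" "x \<notin> A"
  shows "vec.dim (vec.span (insert x A)) = vec.dim A + 1"
proof -
  have "vec.span A = A" using assms(1) by simp
  then have "x \<notin> vec.span A" using assms(2) by (simp only: not_False_eq_True)
  then show ?thesis using vec.dim_insert[of x A] by simp
qed

lemma subspace_eq_span_insert:
  fixes A W :: "('a::field ^ 'n::finite) set"
  assumes A: "vec.subspace A" and W: "W \<in> subspaces_between (vec.dim A + 1) A B"
    and x: "x \<in> W - A"
  shows "W = vec.span (insert x A)"
proof -
  have "vec.span (insert x A) \<subseteq> W"
    using W x by (intro vec.span_minimal) auto
  moreover have "vec.dim W \<le> vec.dim (vec.span (insert x A))"
    using W x dim_span_insert_subspace[OF A] by simp
  ultimately show ?thesis
    using W vec.subspace_dim_equal[OF vec.subspace_span] by (metis mem_subspaces_between)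
qed

text \<open>Every vector of B - A lies in exactly one (dim A + 1)-space between A and B.\<close>

lemma card_subspaces_between_succ:
  fixes A B :: "('a::{field,finite} ^ 'n::finite) set"
  assumes A: "vec.subspace A" and B: "vec.subspace B" and AB: "A \<subseteq> B"
  shows "card (subspaces_between (vec.dim A + 1) A B) * (CARD('a) ^ (vec.dim A + 1) - CARD('a) ^ vec.dim A)
         = CARD('a) ^ vec.dim B - CARD('a) ^ vec.dim A"
proof -
  let ?F = "subspaces_between (vec.dim A + 1) A B"
  have partition: "B - A = (\<Union>W\<in>?F. W - A)"
  proof
    show "B - A \<subseteq> (\<Union>W\<in>?F. W - A)"
    proof
      fix x assume x: "x \<in> B - A"
      have "vec.span (insert x A) \<subseteq> B" using x AB B by (intro vec.span_minimal) auto
      moreover have "insert x A \<subseteq> vec.span (insert x A)" by (rule vec.span_superset)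
      ultimately have "vec.span (insert x A) \<in> ?F"
        using dim_span_insert_subspace[OF A] x by auto
      then show "x \<in> (\<Union>W\<in>?F. W - A)" using x vec.span_superset[of "insert x A"] by auto
    qed
  qed (unfold subspaces_between_def, blast)
  have disjoint: "(W1 - A) \<inter> (W2 - A) = {}" if "W1 \<in> ?F" "W2 \<in> ?F" "W1 \<noteq> W2" for W1 W2
  proof (rule equals0I)
    fix x assume "x \<in> (W1 - A) \<inter> (W2 - A)"
    then have "W1 = vec.span (insert x A)" "W2 = vec.span (insert x A)"
      using subspace_eq_span_insert[OF A that(1)] subspace_eq_span_insert[OF A that(2)] by auto
    then show False using that(3) by simp
  qed
  have card_piece: "card (W - A) = CARD('a) ^ (vec.dim A + 1) - CARD('a) ^ vec.dim A" if "W \<in> ?F" for W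
    using that card_Diff_subset[of A W] card_subspace_eq_power_dim[OF A]
      card_subspace_eq_power_dim[of W] by simp
  have "card ?F * (CARD('a) ^ (vec.dim A + 1) - CARD('a) ^ vec.dim A) = (\<Sum>W\<in>?F. card (W - A))"
    using card_piece by simp
  also have "\<dots> = card (B - A)"
    unfolding partition by (rule card_UN_disjoint[symmetric]) (use disjoint in auto)
  also have "\<dots> = CARD('a) ^ vec.dim B - CARD('a) ^ vec.dim A"
    using card_Diff_subset[of A B] AB card_subspace_eq_power_dim[OF A] card_subspace_eq_power_dim[OF B]
    by simp
  finally show ?thesis .
qed

lemma two_le_card_field: "2 \<le> CARD('a::{field,finite})"
  using card_mono[of UNIV "{0::'a, 1}"] by simp

lemma card_lines_of_plane:
  fixes P :: "('a::{field,finite} ^ 'n::finite) set"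
  assumes "vec.subspace P" "vec.dim P = 2"
  shows "card (subspaces_between 1 {0} P) = CARD('a) + 1"
proof -
  have "card (subspaces_between 1 {0} P) * (CARD('a) - 1) = CARD('a)\<^sup>2 - 1"
    using card_subspaces_between_succ[OF vec.subspace_single_0 assms(1)] assms vec.subspace_0[OF assms(1)] by simp
  also have "\<dots> = (CARD('a) + 1) * (CARD('a) - 1)"
    using two_le_card_field[where 'a='a] by (simp add: algebra_simps power2_eq_square)
  finally show ?thesis
    using two_le_card_field[where 'a='a] by (simp only: mult_cancel2) simp
qed

lemma card_lines_of_3space:
  fixes V :: "('a::{field,finite} ^ 'n::finite) set"
  assumes "vec.subspace V" "vec.dim V = 3"
  shows "card (subspaces_between 1 {0} V) = CARD('a)\<^sup>2 + CARD('a) + 1"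
proof -
  have "card (subspaces_between 1 {0} V) * (CARD('a) - 1) = CARD('a) ^ 3 - 1"
    using card_subspaces_between_succ[OF vec.subspace_single_0 assms(1)] assms vec.subspace_0[OF assms(1)] by simp
  also have "\<dots> = (CARD('a)\<^sup>2 + CARD('a) + 1) * (CARD('a) - 1)"
    using two_le_card_field[where 'a='a] by (simp add: algebra_simps power2_eq_square power3_eq_cube)
  finally show ?thesis
    using two_le_card_field[where 'a='a] by (simp only: mult_cancel2) simp
qed

lemma card_planes_through_line:
  fixes m V :: "('a::{field,finite} ^ 'n::finite) set"
  assumes "vec.subspace m" "vec.dim m = 1" "vec.subspace V" "vec.dim V = 3" "m \<subseteq> V"
  shows "card (subspaces_between 2 m V) = CARD('a) + 1"
proof -
  have "card (subspaces_between 2 m V) * (CARD('a)\<^sup>2 - CARD('a)) = CARD('a) ^ 3 - CARD('a)"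
    using card_subspaces_between_succ[OF assms(1,3,5)] assms(2,4) by (simp add: numeral_2_eq_2)
  also have "\<dots> = (CARD('a) + 1) * (CARD('a)\<^sup>2 - CARD('a))"
    using two_le_card_field[where 'a='a] by (simp add: algebra_simps power2_eq_square power3_eq_cube)
  finally show ?thesis
    using two_le_card_field[where 'a='a] by (simp only: mult_cancel2) (simp add: power2_eq_square)
qed

lemma card_planes_of_3space:
  fixes V :: "('a::{field,finite} ^ 'n::finite) set"
  assumes V: "vec.subspace V" "vec.dim V = 3"
  shows "card (subspaces_between 2 {0} V) = CARD('a)\<^sup>2 + CARD('a) + 1"
proof -
  let ?L = "subspaces_between 1 {0} V" and ?P = "subspaces_between 2 {0} V"
  have "(\<Sum>m\<in>?L. card {P\<in>?P. m \<subseteq> P}) = (\<Sum>P\<in>?P. card {m\<in>?L. m \<subseteq> P})"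
    using sum.swap_restrict[of ?L ?P "\<lambda>_ _. 1::nat" "\<lambda>m P. m \<subseteq> P"] by simp
  moreover have "card {P\<in>?P. m \<subseteq> P} = CARD('a) + 1" if "m \<in> ?L" for m
  proof -
    have "{P\<in>?P. m \<subseteq> P} = subspaces_between 2 m V"
      using that vec.subspace_0 by auto
    then show ?thesis using card_planes_through_line[of m V] that V by simp
  qed
  moreover have "card {m\<in>?L. m \<subseteq> P} = CARD('a) + 1" if "P \<in> ?P" for P
  proof -
    have "{m\<in>?L. m \<subseteq> P} = subspaces_between 1 {0} P"
      using that unfolding subspaces_between_def by blast
    then show ?thesis using card_lines_of_plane[of P] that by simp
  qed
  ultimately have "card ?P * (CARD('a) + 1) = card ?L * (CARD('a) + 1)" by simp
  then have "card ?P = card ?L" by (simp only: mult_cancel2) simp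
  then show ?thesis using card_lines_of_3space[OF V] by simp
qed

definition num_3spaces_over_plane :: "nat \<Rightarrow> nat \<Rightarrow> nat" where
  "num_3spaces_over_plane q n = (q ^ n - q\<^sup>2) div (q ^ 3 - q\<^sup>2)"

lemma card_3spaces_over_plane:
  fixes P :: "('a::{field,finite} ^ 'n::finite) set"
  assumes "vec.subspace P" "vec.dim P = 2"
  shows "card (subspaces_between 3 P UNIV) = num_3spaces_over_plane CARD('a) CARD('n)"
proof -
  have "card (subspaces_between 3 P UNIV) * (CARD('a) ^ 3 - CARD('a)\<^sup>2) = CARD('a) ^ CARD('n) - CARD('a)\<^sup>2"
    using card_subspaces_between_succ[OF assms(1) vec.subspace_UNIV subset_UNIV] assms(2)
    by (simp add: card_cart_basis numeral_3_eq_3)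
  moreover have "CARD('a)\<^sup>2 < CARD('a) ^ 3"
    using two_le_card_field[where 'a='a] by (intro power_strict_increasing) auto
  ultimately show ?thesis unfolding num_3spaces_over_plane_def
    by (metis nonzero_mult_div_cancel_right zero_less_diff less_not_refl2)
qed

lemma succ_sq_less_num_3spaces_over_plane:
  fixes q n :: nat
  assumes "2 \<le> q" "6 \<le> n"
  shows "(q + 1) * (q + 1) < num_3spaces_over_plane q n"
proof -
  obtain r where q: "q = r + 1" and r: "1 \<le> r"
    using assms(1) by (metis Suc_eq_plus1 Suc_le_D Suc_le_mono one_add_one)
  have core: "((q + 1) * (q + 1) + 1) * r + 1 \<le> q * q * (q * q)"
  proof -
    have "r \<le> r * r" using r by simp
    moreover have "((q + 1) * (q + 1) + 1) * r + 1 = r*r*r + 4*(r*r) + 5*r + 1"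
      unfolding q by (simp add: algebra_simps)
    moreover have "q * q * (q * q) = r*r*r*r + 4*(r*r*r) + 6*(r*r) + 4*r + 1"
      unfolding q by (simp add: algebra_simps)
    ultimately show ?thesis by linarith
  qed
  have "((q + 1) * (q + 1) + 1) * (q ^ 3 - q\<^sup>2) + q\<^sup>2 = q * q * (((q + 1) * (q + 1) + 1) * r + 1)"
    unfolding q by (simp add: power2_eq_square power3_eq_cube algebra_simps)
  also have "\<dots> \<le> q * q * (q * q * (q * q))" using core by (rule mult_left_mono) simp
  also have "\<dots> = q ^ 6" by (simp add: power_def numeral_eq_Suc)
  also have "\<dots> \<le> q ^ n" using assms by (intro power_increasing) auto
  finally have "((q + 1) * (q + 1) + 1) * (q ^ 3 - q\<^sup>2) \<le> q ^ n - q\<^sup>2" by linarith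
  moreover have "0 < q ^ 3 - q\<^sup>2" using assms(1) by (simp add: q power2_eq_square power3_eq_cube)
  ultimately have "(q + 1) * (q + 1) + 1 \<le> (q ^ n - q\<^sup>2) div (q ^ 3 - q\<^sup>2)"
    by (simp add: less_eq_div_iff_mult_less_eq)
  then show ?thesis unfolding num_3spaces_over_plane_def by simp
qed

lemma dim_span_Un_add_dim_Int:
  fixes P Q :: "('a::field ^ 'n::finite) set"
  assumes "vec.subspace P" "vec.subspace Q"
  shows "vec.dim (vec.span (P \<union> Q)) + vec.dim (P \<inter> Q) = vec.dim P + vec.dim Q"
proof -
  have "vec.span P = P" "vec.span Q = Q" using assms by simp_all
  then have "vec.span (P \<union> Q) = {x + y |x y. x \<in> P \<and> y \<in> Q}"
    using vec.span_Un[of P Q] by (simp only:)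
  then show ?thesis using vec.dim_sums_Int[OF assms] by simp
qed

lemma one_le_dim_Int_planes:
  fixes P Q W :: "('a::field ^ 'n::finite) set"
  assumes "vec.subspace P" "vec.subspace Q" "vec.subspace W" "vec.dim P = 2" "vec.dim Q = 2"
    "P \<subseteq> W" "Q \<subseteq> W" "vec.dim W = 3"
  shows "1 \<le> vec.dim (P \<inter> Q)"
proof -
  have "vec.span (P \<union> Q) \<subseteq> W" using assms by (intro vec.span_minimal) auto
  then have "vec.dim (vec.span (P \<union> Q)) \<le> 3" using vec.dim_subset assms(8) by metis
  then show ?thesis using dim_span_Un_add_dim_Int[OF assms(1,2)] assms(4,5) by simp
qed

lemma dim_Int_distinct_planes:
  fixes P Q W :: "('a::field ^ 'n::finite) set"
  assumes "vec.subspace P" "vec.subspace Q" "vec.subspace W" "vec.dim P = 2" "vec.dim Q = 2"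
    "P \<subseteq> W" "Q \<subseteq> W" "vec.dim W = 3" "P \<noteq> Q"
  shows "vec.dim (P \<inter> Q) = 1"
proof -
  have PQ: "vec.subspace (P \<inter> Q)" using assms(1,2) by (rule vec.subspace_inter)
  have "\<not> 2 \<le> vec.dim (P \<inter> Q)"
  proof
    assume "2 \<le> vec.dim (P \<inter> Q)"
    then have "P \<inter> Q = P" "P \<inter> Q = Q"
      using PQ assms(1,2,4,5) by (intro vec.subspace_dim_equal; simp)+
    then show False using assms(9) by simp
  qed
  then show ?thesis using one_le_dim_Int_planes[OF assms(1-8)] by simp
qed

lemma span_Un_planes_eq:
  fixes P Q W :: "('a::field ^ 'n::finite) set"
  assumes "vec.subspace P" "vec.subspace Q" "vec.subspace W" "vec.dim P = 2" "vec.dim Q = 2"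
    "P \<subseteq> W" "Q \<subseteq> W" "vec.dim W = 3" "vec.dim (P \<inter> Q) = 1"
  shows "vec.span (P \<union> Q) = W"
proof (rule vec.subspace_dim_equal)
  show "vec.span (P \<union> Q) \<subseteq> W" using assms(3,6,7) by (intro vec.span_minimal) auto
  show "vec.dim W \<le> vec.dim (vec.span (P \<union> Q))"
    using dim_span_Un_add_dim_Int[OF assms(1,2)] assms(4,5,8,9) by simp
qed (rule vec.subspace_span, rule assms(3))

lemma ex_nonzero_if_dim_pos:
  fixes X :: "('a::field ^ 'n::finite) set"
  assumes "1 \<le> vec.dim X"
  shows "\<exists>x\<in>X. x \<noteq> 0"
proof (rule ccontr)
  assume "\<not> (\<exists>x\<in>X. x \<noteq> 0)"
  then have "X \<subseteq> {0}" by blast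
  then have "vec.dim X = 0" by (rule vec.dim_eq_0[THEN iffD2])
  then show False using assms by linarith
qed

lemma dim_pos_if_nonzero:
  fixes X :: "('a::field ^ 'n::finite) set"
  assumes "x \<in> X" "x \<noteq> 0"
  shows "1 \<le> vec.dim X"
  using vec.dim_subset[of "{x}" X] assms by simp

lemma line_subset_if_nonzero_mem:
  fixes m V :: "('a::field ^ 'n::finite) set"
  assumes "vec.subspace m" "vec.dim m = 1" "vec.subspace V" "x \<in> m" "x \<in> V" "x \<noteq> 0"
  shows "m \<subseteq> V"
proof -
  have "1 \<le> vec.dim (m \<inter> V)" using dim_pos_if_nonzero[of x "m \<inter> V"] assms by simp
  then have "m \<inter> V = m"
    using assms(1-3) by (intro vec.subspace_dim_equal vec.subspace_inter) auto
  then show ?thesis by blast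
qed

lemma Int_3spaces_eq_plane:
  fixes U W P :: "('a::field ^ 'n::finite) set"
  assumes "U \<in> ksubspaces 3" "W \<in> ksubspaces 3" "U \<noteq> W" "P \<in> subspaces_between 2 {0} U" "P \<subseteq> W"
  shows "U \<inter> W = P"
proof -
  have UW: "vec.subspace (U \<inter> W)" using assms(1,2) vec.subspace_inter by auto
  have "vec.dim (U \<inter> W) \<le> 2"
  proof (rule ccontr)
    assume "\<not> vec.dim (U \<inter> W) \<le> 2"
    then have "U \<inter> W = U" "U \<inter> W = W"
      using assms(1,2) UW by (intro vec.subspace_dim_equal; simp)+
    then show False using assms(3) by simp
  qed
  then show ?thesis using assms(4,5) UW by (intro vec.subspace_dim_equal[symmetric]) auto
qed

section \<open>Neighbourhoods in the Grassmann graph of 3-spaces\<close>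

definition grassmann_nbrs :: "('a::field ^ 'n::finite) set \<Rightarrow> ('a ^ 'n) set set \<Rightarrow> ('a ^ 'n) set set" where
  "grassmann_nbrs U X = {W \<in> ksubspaces 3. vec.dim (U \<inter> W) = 2 \<and> W \<in> X}"

text \<open>For a plane P of a 3-space U these are the neighbours W of U in X with U \<inter> W = P.\<close>

definition grassmann_nbrs_via :: "('a::field ^ 'n::finite) set \<Rightarrow> ('a ^ 'n) set \<Rightarrow> ('a ^ 'n) set set \<Rightarrow> ('a ^ 'n) set set" where
  "grassmann_nbrs_via P U X = {W \<in> ksubspaces 3. P \<subseteq> W \<and> W \<noteq> U \<and> W \<in> X}"

lemma card_grassmann_nbrs_eq_sum:
  fixes U :: "('a::{field,finite} ^ 'n::finite) set"
  assumes U: "U \<in> ksubspaces 3"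
  shows "card (grassmann_nbrs U X) = (\<Sum>P\<in>subspaces_between 2 {0} U. card (grassmann_nbrs_via P U X))"
proof -
  let ?planes = "subspaces_between 2 {0} U"
  have "grassmann_nbrs U X = (\<Union>P\<in>?planes. grassmann_nbrs_via P U X)"
  proof
    show "grassmann_nbrs U X \<subseteq> (\<Union>P\<in>?planes. grassmann_nbrs_via P U X)"
    proof
      fix W assume W: "W \<in> grassmann_nbrs U X"
      then have "U \<inter> W \<in> ?planes"
        using U vec.subspace_inter vec.subspace_0 by (auto simp: grassmann_nbrs_def)
      moreover have "W \<in> grassmann_nbrs_via (U \<inter> W) U X"
        using W U by (auto simp: grassmann_nbrs_def grassmann_nbrs_via_def)
      ultimately show "W \<in> (\<Union>P\<in>?planes. grassmann_nbrs_via P U X)" by blast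
    qed
    show "(\<Union>P\<in>?planes. grassmann_nbrs_via P U X) \<subseteq> grassmann_nbrs U X"
      using Int_3spaces_eq_plane[OF U] by (fastforce simp: grassmann_nbrs_def grassmann_nbrs_via_def)
  qed
  moreover have "grassmann_nbrs_via P1 U X \<inter> grassmann_nbrs_via P2 U X = {}"
    if "P1 \<in> ?planes" "P2 \<in> ?planes" "P1 \<noteq> P2" for P1 P2
  proof (rule equals0I)
    fix W assume "W \<in> grassmann_nbrs_via P1 U X \<inter> grassmann_nbrs_via P2 U X"
    then have W: "W \<in> ksubspaces 3" "U \<noteq> W" "P1 \<subseteq> W" "P2 \<subseteq> W"
      unfolding grassmann_nbrs_via_def by blast+
    then have "U \<inter> W = P1" "U \<inter> W = P2"
      using Int_3spaces_eq_plane[OF U W(1,2)] that(1,2) by blast+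
    then show False using that(3) by simp
  qed
  ultimately show ?thesis by (simp add: card_UN_disjoint)
qed

lemma card_grassmann_nbrs_via_UNIV:
  fixes U P :: "('a::{field,finite} ^ 'n::finite) set"
  assumes U: "U \<in> ksubspaces 3" and P: "P \<in> subspaces_between 2 {0} U"
  shows "card (grassmann_nbrs_via P U UNIV) = num_3spaces_over_plane CARD('a) CARD('n) - 1"
proof -
  have "grassmann_nbrs_via P U UNIV = subspaces_between 3 P UNIV - {U}"
    by (auto simp: grassmann_nbrs_via_def)
  moreover have "U \<in> subspaces_between 3 P UNIV" using U P by simp
  ultimately show ?thesis using card_3spaces_over_plane[of P] P by (simp add: card_Diff_singleton)
qed

definition grassmann_degree :: "nat \<Rightarrow> nat \<Rightarrow> nat" where
  "grassmann_degree q n = (q\<^sup>2 + q + 1) * (num_3spaces_over_plane q n - 1)"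

lemma card_grassmann_nbrs_UNIV:
  fixes U :: "('a::{field,finite} ^ 'n::finite) set"
  assumes U: "U \<in> ksubspaces 3"
  shows "card (grassmann_nbrs U UNIV) = grassmann_degree CARD('a) CARD('n)"
  using U card_grassmann_nbrs_eq_sum[OF U] card_grassmann_nbrs_via_UNIV[OF U]
    card_planes_of_3space[of U] by (simp add: grassmann_degree_def)

lemma card_grassmann_nbrs_Un:
  fixes U :: "('a::{field,finite} ^ 'n::finite) set"
  assumes "X \<inter> Y = {}"
  shows "card (grassmann_nbrs U (X \<union> Y)) = card (grassmann_nbrs U X) + card (grassmann_nbrs U Y)"
proof -
  have "grassmann_nbrs U (X \<union> Y) = grassmann_nbrs U X \<union> grassmann_nbrs U Y"
    "grassmann_nbrs U X \<inter> grassmann_nbrs U Y = {}"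
    using assms unfolding grassmann_nbrs_def by blast+
  then show ?thesis by (simp add: card_Un_disjoint)
qed

lemma adjacent_eq_grassmann_nbrs:
  "U \<in> ksubspaces 3 \<Longrightarrow> {W \<in> ksubspaces 3. grassmann_adj 3 U W \<and> W \<in> X} = grassmann_nbrs U X"
  unfolding grassmann_adj_def grassmann_nbrs_def by auto

section \<open>Spreads\<close>

locale spread =
  fixes S :: "('a::{field,finite} ^ 'n::finite) set set"
  assumes spread3: "spread3 S"
begin

lemma spread_ksubspace: "V \<in> S \<Longrightarrow> V \<in> ksubspaces 3"
  using spread3 unfolding spread3_def by auto

lemma spread_covers: "x \<noteq> 0 \<Longrightarrow> \<exists>V\<in>S. x \<in> V"
  using spread3 unfolding spread3_def by blast

lemma spread_eq_if_common_nonzero: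
  "V1 \<in> S \<Longrightarrow> V2 \<in> S \<Longrightarrow> x \<in> V1 \<Longrightarrow> x \<in> V2 \<Longrightarrow> x \<noteq> 0 \<Longrightarrow> V1 = V2"
  using spread3 unfolding spread3_def by blast

lemma spread_eq_if_common_subspace:
  assumes "V1 \<in> S" "V2 \<in> S" "X \<subseteq> V1" "X \<subseteq> V2" "1 \<le> vec.dim X"
  shows "V1 = V2"
  using ex_nonzero_if_dim_pos[OF assms(5)] spread_eq_if_common_nonzero[OF assms(1,2)] assms(3,4)
  by blast

text \<open>The spread element through a line m; for other m the value is unspecified.\<close>

definition spread_elem :: "('a ^ 'n) set \<Rightarrow> ('a ^ 'n) set" where
  "spread_elem m = (THE V. V \<in> S \<and> m \<subseteq> V)"

lemma ex1_spread_elem: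
  assumes "vec.subspace m" "vec.dim m = 1"
  shows "\<exists>!V. V \<in> S \<and> m \<subseteq> V"
proof -
  obtain x where x: "x \<in> m" "x \<noteq> 0" using ex_nonzero_if_dim_pos[of m] assms(2) by auto
  obtain V where V: "V \<in> S" "x \<in> V" using spread_covers[OF x(2)] by blast
  have "m \<subseteq> V"
    using line_subset_if_nonzero_mem[OF assms _ x(1) V(2) x(2)] spread_ksubspace[OF V(1)] by simp
  moreover have "V' = V" if "V' \<in> S" "m \<subseteq> V'" for V'
    using spread_eq_if_common_nonzero[OF that(1) V(1) _ V(2) x(2)] x(1) that(2) by blast
  ultimately show ?thesis using V(1) by blast
qed

lemma spread_elem:
  assumes "vec.subspace m" "vec.dim m = 1"
  shows "spread_elem m \<in> S" "m \<subseteq> spread_elem m"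
  using theI'[OF ex1_spread_elem[OF assms]] unfolding spread_elem_def by auto

lemma spread_elem_eqI:
  assumes "vec.subspace m" "vec.dim m = 1" "V \<in> S" "m \<subseteq> V"
  shows "spread_elem m = V"
  using ex1_spread_elem[OF assms(1,2)] spread_elem[OF assms(1,2)] assms(3,4) by blast

lemma dim_Int_spread_le:
  assumes "U \<in> ksubspaces 3" "U \<notin> S" "V \<in> S"
  shows "vec.dim (U \<inter> V) \<le> 2"
proof (rule ccontr)
  assume "\<not> vec.dim (U \<inter> V) \<le> 2"
  moreover have "vec.dim (U \<inter> V) \<le> vec.dim U" by (rule vec.dim_subset) blast
  ultimately have d: "vec.dim (U \<inter> V) = 3" using assms(1) by simp
  have UV: "vec.subspace (U \<inter> V)" using assms(1) spread_ksubspace[OF assms(3)] vec.subspace_inter by auto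
  have "U \<inter> V = U" "U \<inter> V = V"
    using d UV assms(1) spread_ksubspace[OF assms(3)] by (intro vec.subspace_dim_equal; simp)+
  then show False using assms(2,3) by auto
qed

lemma dim_Int_spread_eq_2_if_plane:
  assumes "U \<in> ksubspaces 3" "U \<notin> S" "V \<in> S" "P \<subseteq> U" "P \<subseteq> V" "vec.dim P = 2"
  shows "vec.dim (U \<inter> V) = 2"
proof -
  have "vec.dim P \<le> vec.dim (U \<inter> V)" using assms(4,5) by (intro vec.dim_subset) blast
  then show ?thesis using dim_Int_spread_le[OF assms(1-3)] assms(6) by simp
qed

lemma spread_eq_if_meets_in_planes:
  assumes "W \<in> ksubspaces 3" "V1 \<in> S" "V2 \<in> S" "vec.dim (W \<inter> V1) = 2" "vec.dim (W \<inter> V2) = 2"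
  shows "V1 = V2"
proof -
  have "1 \<le> vec.dim ((W \<inter> V1) \<inter> (W \<inter> V2))"
    using assms spread_ksubspace[OF assms(2)] spread_ksubspace[OF assms(3)]
    by (intro one_le_dim_Int_planes[where W=W]) (auto intro: vec.subspace_inter)
  then show ?thesis by (rule spread_eq_if_common_subspace[OF assms(2,3), rotated 2]) auto
qed

definition C1 :: "('a ^ 'n) set set" where
  "C1 = {U \<in> ksubspaces 3. U \<notin> S \<and> (\<exists>V\<in>S. vec.dim (U \<inter> V) = 2)}"

definition C2 :: "('a ^ 'n) set set" where
  "C2 = ksubspaces 3 - S - C1"

lemma card_planes_through_line_not_in:
  assumes U: "U \<in> ksubspaces 3" "U \<notin> S" and m: "vec.subspace m" "vec.dim m = 1" "m \<subseteq> U"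
  shows "card {Q \<in> subspaces_between 2 m (spread_elem m). \<not> Q \<subseteq> U} =
           (if vec.dim (U \<inter> spread_elem m) = 2 then CARD('a) else CARD('a) + 1)"
proof -
  let ?V = "spread_elem m"
  let ?Qs = "subspaces_between 2 m ?V"
  have V: "?V \<in> ksubspaces 3" "m \<subseteq> ?V" using spread_elem[OF m(1,2)] spread_ksubspace by auto
  have UV: "vec.subspace (U \<inter> ?V)" using U(1) V(1) vec.subspace_inter by auto
  have card_Qs: "card ?Qs = CARD('a) + 1" using card_planes_through_line[OF m(1,2) _ _ V(2)] V(1) by simp
  have Q_in_U: "Q \<subseteq> U \<longleftrightarrow> Q = U \<inter> ?V" if "Q \<in> ?Qs" "vec.dim (U \<inter> ?V) = 2" for Q
  proof
    assume "Q \<subseteq> U"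
    then have "Q \<subseteq> U \<inter> ?V" using that(1) by auto
    then show "Q = U \<inter> ?V" using that UV by (intro vec.subspace_dim_equal) auto
  qed auto
  have Q_not_in_U: "\<not> Q \<subseteq> U" if "Q \<in> ?Qs" "vec.dim (U \<inter> ?V) \<noteq> 2" for Q
  proof
    assume "Q \<subseteq> U"
    then have "vec.dim Q \<le> vec.dim (U \<inter> ?V)" using that(1) by (intro vec.dim_subset) auto
    then show False using that dim_Int_spread_le[OF U spread_elem(1)[OF m(1,2)]] by simp
  qed
  show ?thesis
  proof (cases "vec.dim (U \<inter> ?V) = 2")
    case True
    then have "U \<inter> ?V \<in> ?Qs" using m(3) V(2) UV by auto
    moreover have "{Q \<in> ?Qs. \<not> Q \<subseteq> U} = ?Qs - {U \<inter> ?V}" using Q_in_U True by auto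
    ultimately show ?thesis using True card_Qs by (simp add: card_Diff_singleton)
  next
    case False
    then have "{Q \<in> ?Qs. \<not> Q \<subseteq> U} = ?Qs" using Q_not_in_U by auto
    then show ?thesis using False card_Qs by simp
  qed
qed

text \<open>For a plane P of U lying in no spread element, W = span (P \<union> Q) is a bijection from the pairs
  (m, Q), m a line of P and Q a plane through m in the spread element of m not contained in U,
  onto the neighbours of U in C1 through P.\<close>

lemma span_plane_Un_spread_plane:
  assumes P: "vec.subspace P" "vec.dim P = 2" and P_free: "\<forall>V\<in>S. \<not> P \<subseteq> V"
    and m: "m \<in> subspaces_between 1 {0} P"
    and Q: "Q \<in> subspaces_between 2 m (spread_elem m)" and Q_U: "\<not> Q \<subseteq> U"
  shows "vec.span (P \<union> Q) \<in> grassmann_nbrs_via P U C1"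
    and "vec.span (P \<union> Q) \<inter> spread_elem m = Q"
    and "P \<inter> Q = m"
proof -
  let ?V = "spread_elem m" and ?W = "vec.span (P \<union> Q)"
  have m': "vec.subspace m" "vec.dim m = 1" "m \<subseteq> P" using m by simp_all
  have Q': "vec.subspace Q" "vec.dim Q = 2" "m \<subseteq> Q" "Q \<subseteq> ?V" using Q by simp_all
  have V: "?V \<in> S" "vec.subspace ?V" "vec.dim ?V = 3"
    using spread_elem(1)[OF m'(1,2)] spread_ksubspace by auto
  have PQ: "vec.subspace (P \<inter> Q)" using P(1) Q'(1) by (rule vec.subspace_inter)
  have "vec.dim (P \<inter> Q) \<le> 1"
  proof (rule ccontr)
    assume "\<not> vec.dim (P \<inter> Q) \<le> 1"
    then have "P \<inter> Q = P" using P PQ by (intro vec.subspace_dim_equal) auto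
    then show False using P_free V(1) Q'(4) by blast
  qed
  then show PQ_eq: "P \<inter> Q = m" using m' Q'(3) PQ by (intro vec.subspace_dim_equal[symmetric]) auto
  have W: "P \<subseteq> ?W" "Q \<subseteq> ?W" using vec.span_superset[of "P \<union> Q"] by blast+
  have dim_W: "vec.dim ?W = 3"
    using dim_span_Un_add_dim_Int[OF P(1) Q'(1)] P(2) Q'(2) m'(2) PQ_eq by simp
  have W_ne: "?W \<noteq> U" using W(2) Q_U by blast
  have W_notin: "?W \<notin> S" using W(1) P_free by blast
  have "vec.dim (?W \<inter> ?V) \<le> 2"
    using dim_Int_spread_le[of ?W ?V] dim_W W_notin V(1) by simp
  then show WV: "?W \<inter> ?V = Q"
    using W(2) Q' V(2) by (intro vec.subspace_dim_equal[symmetric] vec.subspace_inter) auto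
  have "vec.dim (?W \<inter> ?V) = 2" using WV Q'(2) by simp
  then have "?W \<in> C1" unfolding C1_def using dim_W W_notin V(1) by auto
  then show "?W \<in> grassmann_nbrs_via P U C1"
    unfolding grassmann_nbrs_via_def using dim_W W(1) W_ne by simp
qed

lemma span_plane_Un_spread_plane_inj:
  assumes P: "vec.subspace P" "vec.dim P = 2" and P_free: "\<forall>V\<in>S. \<not> P \<subseteq> V"
    and mQ: "m \<in> subspaces_between 1 {0} P" "Q \<in> subspaces_between 2 m (spread_elem m)" "\<not> Q \<subseteq> U"
    and mQ': "m' \<in> subspaces_between 1 {0} P" "Q' \<in> subspaces_between 2 m' (spread_elem m')" "\<not> Q' \<subseteq> U"
    and eq: "vec.span (P \<union> Q) = vec.span (P \<union> Q')"
  shows "m = m' \<and> Q = Q'"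
proof -
  note props = span_plane_Un_spread_plane[OF P P_free mQ]
  note props' = span_plane_Un_spread_plane[OF P P_free mQ']
  have W: "vec.span (P \<union> Q) \<in> ksubspaces 3" using props(1) unfolding grassmann_nbrs_via_def by blast
  have "spread_elem m \<in> S" "spread_elem m' \<in> S" using mQ(1) mQ'(1) spread_elem(1) by simp_all
  moreover have "vec.dim (vec.span (P \<union> Q) \<inter> spread_elem m) = 2"
    unfolding props(2) using mQ(2) by simp
  moreover have "vec.dim (vec.span (P \<union> Q) \<inter> spread_elem m') = 2"
    unfolding eq props'(2) using mQ'(2) by simp
  ultimately have same: "spread_elem m = spread_elem m'" by (rule spread_eq_if_meets_in_planes[OF W])
  have "Q = vec.span (P \<union> Q) \<inter> spread_elem m" by (rule props(2)[symmetric])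
  also have "\<dots> = Q'" unfolding eq same by (rule props'(2))
  finally have "Q = Q'" .
  moreover have "m = m'" using props(3) props'(3) \<open>Q = Q'\<close> by simp
  ultimately show ?thesis by simp
qed

lemma grassmann_nbrs_via_C1_decompose:
  assumes U: "U \<in> ksubspaces 3" and P: "P \<in> subspaces_between 2 {0} U" and P_free: "\<forall>V\<in>S. \<not> P \<subseteq> V"
    and W: "W \<in> grassmann_nbrs_via P U C1"
  obtains m Q where "m \<in> subspaces_between 1 {0} P" "Q \<in> subspaces_between 2 m (spread_elem m)"
    "\<not> Q \<subseteq> U" "W = vec.span (P \<union> Q)"
proof -
  have P': "vec.subspace P" "vec.dim P = 2" using P by simp_all
  have W': "W \<in> ksubspaces 3" "P \<subseteq> W" "W \<noteq> U" "W \<in> C1"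
    using W unfolding grassmann_nbrs_via_def by blast+
  then have W3: "vec.subspace W" "vec.dim W = 3" by simp_all
  obtain V where V: "V \<in> S" "vec.dim (W \<inter> V) = 2"
    using W'(4) unfolding C1_def by blast
  define Q where "Q = W \<inter> V"
  have Q: "vec.subspace Q" "vec.dim Q = 2" "Q \<subseteq> W" "Q \<subseteq> V"
    unfolding Q_def using V(2) vec.subspace_inter[OF W3(1)] spread_ksubspace[OF V(1)] by auto
  have "P \<noteq> Q" using P_free V(1) Q(4) by blast
  then have dim_PQ: "vec.dim (P \<inter> Q) = 1"
    using dim_Int_distinct_planes[OF P'(1) Q(1) W3(1) P'(2) Q(2) W'(2) Q(3) W3(2)] by simp
  have PQ: "vec.subspace (P \<inter> Q)" using P'(1) Q(1) by (rule vec.subspace_inter)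
  have "P \<inter> Q \<in> subspaces_between 1 {0} P" using PQ dim_PQ vec.subspace_0[OF PQ] by auto
  moreover have "spread_elem (P \<inter> Q) = V" using spread_elem_eqI[OF PQ dim_PQ V(1)] Q(4) by blast
  then have "Q \<in> subspaces_between 2 (P \<inter> Q) (spread_elem (P \<inter> Q))" using Q by auto
  moreover have "\<not> Q \<subseteq> U"
  proof
    assume "Q \<subseteq> U"
    then have "Q \<subseteq> P" using Int_3spaces_eq_plane[OF U W'(1) W'(3)[symmetric] P W'(2)] Q(3) by blast
    then have "Q = P" using Q P' by (intro vec.subspace_dim_equal) auto
    then show False using \<open>P \<noteq> Q\<close> by simp
  qed
  moreover have "W = vec.span (P \<union> Q)"
    using span_Un_planes_eq[OF P'(1) Q(1) W3(1) P'(2) Q(2) W'(2) Q(3) W3(2) dim_PQ] by simp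
  ultimately show ?thesis by (rule that)
qed

lemma card_grassmann_nbrs_via_C1:
  assumes U: "U \<in> ksubspaces 3" and P: "P \<in> subspaces_between 2 {0} U" and P_free: "\<forall>V\<in>S. \<not> P \<subseteq> V"
  shows "card (grassmann_nbrs_via P U C1) =
         (\<Sum>m\<in>subspaces_between 1 {0} P. card {Q \<in> subspaces_between 2 m (spread_elem m). \<not> Q \<subseteq> U})"
proof -
  let ?pairs = "SIGMA m:subspaces_between 1 {0} P. {Q \<in> subspaces_between 2 m (spread_elem m). \<not> Q \<subseteq> U}"
  let ?f = "\<lambda>(m, Q). vec.span (P \<union> Q)"
  have P': "vec.subspace P" "vec.dim P = 2" using P by auto
  have props: "?f x \<in> grassmann_nbrs_via P U C1" if "x \<in> ?pairs" for x
    using that span_plane_Un_spread_plane(1)[OF P' P_free, of "fst x" "snd x" U] by (cases x) auto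
  have inj: "inj_on ?f ?pairs"
  proof (rule inj_onI)
    fix x y assume "x \<in> ?pairs" "y \<in> ?pairs" "?f x = ?f y"
    then show "x = y"
      using span_plane_Un_spread_plane_inj[OF P' P_free, where m="fst x" and Q="snd x" and U=U
          and m'="fst y" and Q'="snd y"]
      by (cases x, cases y) simp
  qed
  have image: "?f ` ?pairs = grassmann_nbrs_via P U C1"
  proof
    show "?f ` ?pairs \<subseteq> grassmann_nbrs_via P U C1"
    proof
      fix W assume "W \<in> ?f ` ?pairs"
      then obtain x where "x \<in> ?pairs" "W = ?f x" by blast
      then show "W \<in> grassmann_nbrs_via P U C1" using props by blast
    qed
    show "grassmann_nbrs_via P U C1 \<subseteq> ?f ` ?pairs"
    proof
      fix W assume "W \<in> grassmann_nbrs_via P U C1"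
      then obtain m Q where "m \<in> subspaces_between 1 {0} P" "Q \<in> subspaces_between 2 m (spread_elem m)"
        "\<not> Q \<subseteq> U" "W = vec.span (P \<union> Q)"
        using grassmann_nbrs_via_C1_decompose[OF U P P_free] by blast
      then show "W \<in> ?f ` ?pairs" by (intro image_eqI[where x="(m, Q)"]) auto
    qed
  qed
  have "card (grassmann_nbrs_via P U C1) = card ?pairs"
    unfolding image[symmetric] by (rule card_image[OF inj])
  also have "\<dots> = (\<Sum>m\<in>subspaces_between 1 {0} P. card {Q \<in> subspaces_between 2 m (spread_elem m). \<not> Q \<subseteq> U})"
    by (rule card_SigmaI) simp_all
  finally show ?thesis .
qed

lemma C1_ksubspace: "C1 \<subseteq> ksubspaces 3"
  unfolding C1_def by blast

lemma C1_disjoint_spread: "S \<inter> C1 = {}"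
  unfolding C1_def by blast

lemma nbrs_in_spread_of_spread:
  assumes "U \<in> S"
  shows "grassmann_nbrs U S = {}"
proof (rule equals0I)
  fix W assume "W \<in> grassmann_nbrs U S"
  then have W: "W \<in> S" "vec.dim (U \<inter> W) = 2" unfolding grassmann_nbrs_def by blast+
  then have "U = W" using spread_eq_if_common_subspace[OF assms W(1), of "U \<inter> W"] by simp
  then show False using W(2) spread_ksubspace[OF assms] by simp
qed

lemma nbrs_in_C1_of_spread:
  assumes "U \<in> S"
  shows "grassmann_nbrs U C1 = grassmann_nbrs U UNIV"
proof -
  have "W \<in> C1" if "W \<in> grassmann_nbrs U UNIV" for W
  proof -
    have W: "W \<in> ksubspaces 3" "vec.dim (W \<inter> U) = 2"
      using that unfolding grassmann_nbrs_def by (auto simp: Int_commute)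
    moreover have "W \<notin> S" using that nbrs_in_spread_of_spread[OF assms] by (auto simp: grassmann_nbrs_def)
    ultimately show ?thesis unfolding C1_def using assms by blast
  qed
  then show ?thesis unfolding grassmann_nbrs_def by blast
qed

lemma nbrs_in_spread_of_C1:
  assumes "U \<in> C1" "V0 \<in> S" "vec.dim (U \<inter> V0) = 2"
  shows "grassmann_nbrs U S = {V0}"
proof -
  have U: "U \<in> ksubspaces 3" using assms(1) C1_ksubspace by blast
  have "V = V0" if "V \<in> grassmann_nbrs U S" for V
    using that spread_eq_if_meets_in_planes[OF U _ assms(2) _ assms(3)] by (simp add: grassmann_nbrs_def)
  moreover have "V0 \<in> grassmann_nbrs U S"
    using assms(2,3) spread_ksubspace by (simp add: grassmann_nbrs_def)
  ultimately show ?thesis by blast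
qed

lemma nbrs_in_spread_of_C2:
  assumes "U \<in> C2"
  shows "grassmann_nbrs U S = {}"
  using assms unfolding C2_def C1_def grassmann_nbrs_def by auto

lemma card_nbrs_in_C1_of_C2:
  assumes U: "U \<in> C2"
  shows "card (grassmann_nbrs U C1) = (CARD('a)\<^sup>2 + CARD('a) + 1) * ((CARD('a) + 1) * (CARD('a) + 1))"
proof -
  have U3: "U \<in> ksubspaces 3" and U_notin: "U \<notin> S" and no_plane: "\<forall>V\<in>S. vec.dim (U \<inter> V) \<noteq> 2"
    using U unfolding C2_def C1_def by auto
  have "card (grassmann_nbrs_via P U C1) = (CARD('a) + 1) * (CARD('a) + 1)"
    if P: "P \<in> subspaces_between 2 {0} U" for P
  proof -
    have P_free: "\<forall>V\<in>S. \<not> P \<subseteq> V"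
      using dim_Int_spread_eq_2_if_plane[OF U3 U_notin] P no_plane by auto
    have "card {Q \<in> subspaces_between 2 m (spread_elem m). \<not> Q \<subseteq> U} = CARD('a) + 1"
      if "m \<in> subspaces_between 1 {0} P" for m
      using card_planes_through_line_not_in[OF U3 U_notin, of m] that P no_plane spread_elem(1)[of m]
      by auto
    then show ?thesis
      using card_grassmann_nbrs_via_C1[OF U3 P P_free] card_lines_of_plane[of P] P by simp
  qed
  then show ?thesis
    using card_grassmann_nbrs_eq_sum[OF U3] card_planes_of_3space[of U] U3 by simp
qed

lemma nbrs_via_spread_plane:
  assumes "V0 \<in> S" "P0 \<in> subspaces_between 2 {0} V0"
  shows "grassmann_nbrs_via P0 U (S \<union> C1) = grassmann_nbrs_via P0 U UNIV"
proof -
  have "W \<in> S \<union> C1" if "W \<in> ksubspaces 3" "P0 \<subseteq> W" for W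
  proof (cases "W \<in> S")
    case False
    then have "vec.dim (W \<inter> V0) = 2"
      using dim_Int_spread_eq_2_if_plane[OF that(1) False assms(1) that(2)] assms(2) by simp
    then show ?thesis unfolding C1_def using that(1) False assms(1) by blast
  qed simp
  then show ?thesis unfolding grassmann_nbrs_via_def by blast
qed

lemma dim_Int_spread_elem_eq_2_iff:
  assumes U: "U \<in> ksubspaces 3" "U \<notin> S" and V0: "V0 \<in> S" "vec.dim (U \<inter> V0) = 2"
    and m: "vec.subspace m" "vec.dim m = 1" "m \<subseteq> U"
  shows "vec.dim (U \<inter> spread_elem m) = 2 \<longleftrightarrow> m \<subseteq> V0"
proof
  assume "vec.dim (U \<inter> spread_elem m) = 2"
  then have "spread_elem m = V0"
    using spread_eq_if_meets_in_planes[OF U(1) spread_elem(1)[OF m(1,2)] V0(1) _ V0(2)] by simp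
  then show "m \<subseteq> V0" using spread_elem(2)[OF m(1,2)] by simp
next
  assume "m \<subseteq> V0"
  then show "vec.dim (U \<inter> spread_elem m) = 2" using spread_elem_eqI[OF m(1,2) V0(1)] V0(2) by simp
qed

lemma not_subset_spread_if_ne_Int_spread:
  assumes U: "U \<in> ksubspaces 3" "U \<notin> S" and V0: "V0 \<in> S" "vec.dim (U \<inter> V0) = 2"
    and P: "P \<in> subspaces_between 2 {0} U" "P \<noteq> U \<inter> V0"
  shows "\<forall>V\<in>S. \<not> P \<subseteq> V"
proof (intro ballI notI)
  fix V assume V: "V \<in> S" "P \<subseteq> V"
  have P': "vec.subspace P" "vec.dim P = 2" "P \<subseteq> U" using P(1) by simp_all
  have "V = V0"
    using spread_eq_if_meets_in_planes[OF U(1) _ V0(1) _ V0(2)]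
      dim_Int_spread_eq_2_if_plane[OF U V(1) P'(3) V(2) P'(2)] V(1) by simp
  then have "P = U \<inter> V0"
    using V(2) P' V0(2) U(1) spread_ksubspace[OF V0(1)]
    by (intro vec.subspace_dim_equal vec.subspace_inter) auto
  then show False using P(2) by simp
qed

text \<open>A plane P \<noteq> U \<inter> V0 of U meets U \<inter> V0 in a single line, the only line of P whose
  spread element meets U in a plane.\<close>

lemma card_nbrs_via_other_plane:
  assumes U: "U \<in> C1" and V0: "V0 \<in> S" "vec.dim (U \<inter> V0) = 2"
    and P: "P \<in> subspaces_between 2 {0} U" "P \<noteq> U \<inter> V0"
  shows "card (grassmann_nbrs_via P U (S \<union> C1)) = CARD('a) * CARD('a) + 2 * CARD('a)"
proof -
  have U3: "U \<in> ksubspaces 3" and U_notin: "U \<notin> S" using U unfolding C1_def by auto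
  have P': "vec.subspace P" "vec.dim P = 2" "P \<subseteq> U" using P(1) by simp_all
  have P0: "vec.subspace (U \<inter> V0)" "U \<inter> V0 \<subseteq> U"
    using vec.subspace_inter U3 spread_ksubspace[OF V0(1)] by auto
  note P_free = not_subset_spread_if_ne_Int_spread[OF U3 U_notin V0 P]
  define l where "l = P \<inter> (U \<inter> V0)"
  have "vec.dim l = 1" unfolding l_def using P' P0 V0(2) U3 P(2)
    by (intro dim_Int_distinct_planes[where W=U]) auto
  then have l: "l \<in> subspaces_between 1 {0} P" "l \<subseteq> V0"
    unfolding l_def using vec.subspace_inter[OF P'(1) P0(1)] vec.subspace_0[OF vec.subspace_inter[OF P'(1) P0(1)]]
    by auto
  have lines: "card {Q \<in> subspaces_between 2 m (spread_elem m). \<not> Q \<subseteq> U} =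
      (if m = l then CARD('a) else CARD('a) + 1)" if "m \<in> subspaces_between 1 {0} P" for m
  proof -
    have m: "vec.subspace m" "vec.dim m = 1" "m \<subseteq> P" using that by simp_all
    have "m \<subseteq> V0 \<longleftrightarrow> m = l"
    proof
      assume "m \<subseteq> V0"
      then have "m \<subseteq> l" using m(3) P'(3) unfolding l_def by blast
      then show "m = l" using m l(1) by (intro vec.subspace_dim_equal) auto
    qed (use l(2) in blast)
    then show ?thesis
      using card_planes_through_line_not_in[OF U3 U_notin m(1,2)] m P'(3)
        dim_Int_spread_elem_eq_2_iff[OF U3 U_notin V0 m(1,2)] by auto
  qed
  have "card (grassmann_nbrs_via P U (S \<union> C1)) = card (grassmann_nbrs_via P U C1)"
    using P_free by (intro arg_cong[where f=card]) (auto simp: grassmann_nbrs_via_def)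
  also have "\<dots> = (\<Sum>m\<in>subspaces_between 1 {0} P. if m = l then CARD('a) else CARD('a) + 1)"
    using card_grassmann_nbrs_via_C1[OF U3 P(1) P_free] lines by simp
  also have "\<dots> = CARD('a) + CARD('a) * (CARD('a) + 1)"
    using sum.remove[OF _ l(1), of "\<lambda>m. if m = l then CARD('a) else CARD('a) + 1"]
      card_lines_of_plane[OF P'(1,2)] l(1) by (simp add: card_Diff_singleton)
  finally show ?thesis by (simp add: algebra_simps)
qed

lemma card_nbrs_in_spread_C1_of_C1:
  assumes U: "U \<in> C1" and V0: "V0 \<in> S" "vec.dim (U \<inter> V0) = 2"
  shows "card (grassmann_nbrs U (S \<union> C1)) = (num_3spaces_over_plane CARD('a) CARD('n) - 1)
    + (CARD('a)\<^sup>2 + CARD('a)) * (CARD('a) * CARD('a) + 2 * CARD('a))"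
proof -
  let ?planes = "subspaces_between 2 {0} U" and ?P0 = "U \<inter> V0"
  let ?c = "\<lambda>P. card (grassmann_nbrs_via P U (S \<union> C1))"
  have U3: "U \<in> ksubspaces 3" using U C1_ksubspace by blast
  have P0: "?P0 \<in> ?planes" "?P0 \<in> subspaces_between 2 {0} V0"
    using V0(2) U3 spread_ksubspace[OF V0(1)] vec.subspace_inter[of U V0] vec.subspace_0[of U] vec.subspace_0[of V0]
    by auto
  have "card (grassmann_nbrs U (S \<union> C1)) = ?c ?P0 + (\<Sum>P\<in>?planes - {?P0}. ?c P)"
    using card_grassmann_nbrs_eq_sum[OF U3] sum.remove[OF _ P0(1), of ?c] by simp
  also have "?c ?P0 = num_3spaces_over_plane CARD('a) CARD('n) - 1"
    using nbrs_via_spread_plane[OF V0(1) P0(2)] card_grassmann_nbrs_via_UNIV[OF U3 P0(1)] by simp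
  also have "(\<Sum>P\<in>?planes - {?P0}. ?c P) = (CARD('a)\<^sup>2 + CARD('a)) * (CARD('a) * CARD('a) + 2 * CARD('a))"
    using card_nbrs_via_other_plane[OF U V0] card_planes_of_3space[of U] U3 P0(1)
    by (simp add: card_Diff_singleton)
  finally show ?thesis .
qed

lemma ex_C1:
  assumes "6 \<le> CARD('n)"
  obtains U V0 where "U \<in> C1" "V0 \<in> S" "vec.dim (U \<inter> V0) = 2"
proof -
  obtain x :: "'a ^ 'n" where x: "x \<noteq> 0"
    using ex_nonzero_if_dim_pos[of "UNIV :: ('a ^ 'n) set"] by (auto simp: card_cart_basis)
  obtain V0 where V0: "V0 \<in> S" using spread_covers[OF x] by blast
  then have "card (subspaces_between 2 {0} V0) \<noteq> 0"
    using card_planes_of_3space[of V0] spread_ksubspace by simp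
  then obtain P0 where P0: "P0 \<in> subspaces_between 2 {0} V0" by (metis card.empty ex_in_conv)
  then have "1 < card (subspaces_between 3 P0 UNIV)"
    using card_3spaces_over_plane[of P0] succ_sq_less_num_3spaces_over_plane[OF two_le_card_field[where 'a='a] assms]
    by simp
  then have "\<not> subspaces_between 3 P0 UNIV \<subseteq> {V0}"
    using card_mono[of "{V0}" "subspaces_between 3 P0 UNIV"] by auto
  then obtain W where W: "W \<in> subspaces_between 3 P0 UNIV" "W \<noteq> V0" by blast
  have W3: "W \<in> ksubspaces 3" "P0 \<subseteq> W" using W(1) by simp_all
  have "W \<notin> S"
  proof
    assume "W \<in> S"
    then show False
      using spread_eq_if_common_subspace[OF _ V0, of W P0] W(2) W3(2) P0 by simp
  qed
  moreover have "vec.dim (W \<inter> V0) = 2"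
    using dim_Int_spread_eq_2_if_plane[OF W3(1) calculation V0 W3(2)] P0 by simp
  ultimately show ?thesis using that W3(1) V0 unfolding C1_def by blast
qed

lemma C2_nonempty:
  assumes "6 \<le> CARD('n)"
  shows "C2 \<noteq> {}"
proof -
  let ?q = "CARD('a)" and ?K = "num_3spaces_over_plane CARD('a) CARD('n)"
  obtain U V0 where U: "U \<in> C1" "V0 \<in> S" "vec.dim (U \<inter> V0) = 2" using ex_C1[OF assms] .
  have U3: "U \<in> ksubspaces 3" using U(1) C1_ksubspace by blast
  have "?q * ?q + 2 * ?q < ?K - 1"
    using succ_sq_less_num_3spaces_over_plane[OF two_le_card_field[where 'a='a] assms] by (simp add: algebra_simps)
  then have "(?q\<^sup>2 + ?q) * (?q * ?q + 2 * ?q) < (?q\<^sup>2 + ?q) * (?K - 1)"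
    using two_le_card_field[where 'a='a] by (intro mult_strict_left_mono) auto
  then have "card (grassmann_nbrs U (S \<union> C1)) < card (grassmann_nbrs U UNIV)"
    using card_nbrs_in_spread_C1_of_C1[OF U] card_grassmann_nbrs_UNIV[OF U3]
    by (simp add: grassmann_degree_def algebra_simps)
  then have "\<not> grassmann_nbrs U UNIV \<subseteq> grassmann_nbrs U (S \<union> C1)"
    by (metis card_mono finite leD)
  then show ?thesis unfolding C2_def grassmann_nbrs_def by blast
qed

section \<open>The distance partition of a spread\<close>

abbreviation dist_ball :: "nat \<Rightarrow> ('a ^ 'n) set set" where
  "dist_ball i \<equiv> ball_set (ksubspaces 3) (grassmann_adj 3) S i"

abbreviation dist_layer :: "nat \<Rightarrow> ('a ^ 'n) set set" where
  "dist_layer i \<equiv> layer (ksubspaces 3) (grassmann_adj 3) S i"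

declare ball_set.simps [simp del] layer.simps [simp del]

lemma ksubspaces_eq_Un: "ksubspaces 3 = S \<union> C1 \<union> C2"
  using spread_ksubspace C1_ksubspace unfolding C2_def by blast

lemma dist_ball_Suc: "dist_ball (Suc i) = dist_ball i \<union> {W \<in> ksubspaces 3. \<exists>U\<in>dist_ball i. grassmann_adj 3 U W}"
  by (rule ball_set.simps(2))

lemma dist_ball_0: "dist_ball 0 = S"
  using spread_ksubspace by (auto simp: ball_set.simps(1))

lemma dist_ball_1: "dist_ball 1 = S \<union> C1"
proof -
  have "{W \<in> ksubspaces 3. \<exists>U\<in>S. grassmann_adj 3 U W} = C1"
  proof
    show "{W \<in> ksubspaces 3. \<exists>U\<in>S. grassmann_adj 3 U W} \<subseteq> C1"
    proof clarify
      fix W U assume W: "W \<in> ksubspaces 3" and U: "U \<in> S" "grassmann_adj 3 U W"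
      then have "W \<in> grassmann_nbrs U UNIV" "vec.dim (W \<inter> U) = 2"
        unfolding grassmann_adj_def grassmann_nbrs_def by (simp_all add: Int_commute)
      then show "W \<in> C1"
        unfolding C1_def using W U(1) nbrs_in_spread_of_spread[OF U(1)]
        by (auto simp: grassmann_nbrs_def)
    qed
    show "C1 \<subseteq> {W \<in> ksubspaces 3. \<exists>U\<in>S. grassmann_adj 3 U W}"
    proof
      fix W assume W: "W \<in> C1"
      then obtain U where "U \<in> S" "vec.dim (W \<inter> U) = 2" unfolding C1_def by blast
      then have "grassmann_adj 3 U W"
        using W C1_ksubspace spread_ksubspace unfolding grassmann_adj_def by (auto simp: Int_commute)
      then show "W \<in> {W \<in> ksubspaces 3. \<exists>U\<in>S. grassmann_adj 3 U W}"
        using W C1_ksubspace \<open>U \<in> S\<close> by blast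
    qed
  qed
  then show ?thesis using dist_ball_Suc[of 0] dist_ball_0 by (simp add: One_nat_def)
qed

lemma dist_ball_2: "dist_ball 2 = ksubspaces 3"
proof -
  have dist_ball_2_eq: "dist_ball 2 = (S \<union> C1) \<union> {W \<in> ksubspaces 3. \<exists>U\<in>S \<union> C1. grassmann_adj 3 U W}"
    using dist_ball_Suc[of 1] unfolding dist_ball_1 by (simp only: Suc_1)
  have C2_in: "W \<in> dist_ball 2" if W: "W \<in> C2" for W
  proof -
    have "grassmann_nbrs W C1 \<noteq> {}" using card_nbrs_in_C1_of_C2[OF W] by auto
    then obtain U where U: "U \<in> C1" "vec.dim (W \<inter> U) = 2"
      unfolding grassmann_nbrs_def by blast
    then have "grassmann_adj 3 U W" using W C1_ksubspace
      unfolding C2_def grassmann_adj_def by (auto simp: Int_commute)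
    then show ?thesis unfolding dist_ball_2_eq using W U(1) unfolding C2_def by blast
  qed
  show ?thesis
  proof
    show "dist_ball 2 \<subseteq> ksubspaces 3"
      unfolding dist_ball_2_eq using spread_ksubspace C1_ksubspace by blast
    show "ksubspaces 3 \<subseteq> dist_ball 2"
    proof
      fix W :: "('a ^ 'n) set" assume "W \<in> ksubspaces 3"
      then have "W \<in> S \<union> C1 \<union> C2" using ksubspaces_eq_Un by blast
      then show "W \<in> dist_ball 2" using C2_in unfolding dist_ball_2_eq by blast
    qed
  qed
qed

lemma dist_ball_ge_2: "2 \<le> i \<Longrightarrow> dist_ball i = ksubspaces 3"
proof (induction i rule: dec_induct)
  case (step i)
  then show ?case unfolding dist_ball_Suc by blast
qed (rule dist_ball_2)

lemma dist_layer_eq: "dist_layer i = (if i = 0 then S else if i = 1 then C1 else if i = 2 then C2 else {})"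
proof -
  have layer_Suc: "dist_layer (Suc k) = dist_ball (Suc k) - dist_ball k" for k
    by (rule layer.simps(2))
  consider "i = 0" | "i = 1" | "i = 2" | k where "i = Suc k" "2 \<le> k"
    by (metis One_nat_def Suc_1 not_less_eq_eq le0 le_antisym not0_implies_Suc)
  then show ?thesis
  proof cases
    case 1
    then show ?thesis using spread_ksubspace by (auto simp: layer.simps(1))
  next
    case 2
    then show ?thesis
      using layer_Suc[of 0] dist_ball_0 dist_ball_1 C1_disjoint_spread by (auto simp: One_nat_def)
  next
    case 3
    then show ?thesis
      using layer_Suc[of 1] dist_ball_1 dist_ball_2 unfolding C2_def by (auto simp: numeral_2_eq_2)
  next
    case 4
    then show ?thesis using layer_Suc[of k] dist_ball_ge_2[of k] dist_ball_ge_2[of "Suc k"] by simp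
  qed
qed

lemma card_nbrs_UNIV_split:
  "card (grassmann_nbrs U UNIV) = card (grassmann_nbrs U S) + card (grassmann_nbrs U C1) + card (grassmann_nbrs U C2)"
proof -
  have "grassmann_nbrs U UNIV = grassmann_nbrs U ((S \<union> C1) \<union> C2)"
    using ksubspaces_eq_Un unfolding grassmann_nbrs_def by auto
  moreover have "(S \<union> C1) \<inter> C2 = {}" "S \<inter> C1 = {}"
    using C1_disjoint_spread unfolding C2_def by auto
  ultimately show ?thesis by (simp add: card_grassmann_nbrs_Un)
qed

lemma card_nbrs_of_spread:
  assumes "U \<in> S"
  shows "card (grassmann_nbrs U S) = 0"
    and "card (grassmann_nbrs U C1) = grassmann_degree CARD('a) CARD('n)"
  using nbrs_in_spread_of_spread[OF assms] nbrs_in_C1_of_spread[OF assms]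
    card_grassmann_nbrs_UNIV spread_ksubspace[OF assms] by simp_all

lemma card_nbrs_of_C1:
  assumes "U \<in> C1"
  defines "c \<equiv> (num_3spaces_over_plane CARD('a) CARD('n) - 1)
    + (CARD('a)\<^sup>2 + CARD('a)) * (CARD('a) * CARD('a) + 2 * CARD('a))"
  shows "card (grassmann_nbrs U S) = 1"
    and "card (grassmann_nbrs U C1) = c - 1"
    and "card (grassmann_nbrs U C2) = grassmann_degree CARD('a) CARD('n) - c"
proof -
  obtain V0 where V0: "V0 \<in> S" "vec.dim (U \<inter> V0) = 2" using assms(1) unfolding C1_def by blast
  show S_nbrs: "card (grassmann_nbrs U S) = 1" using nbrs_in_spread_of_C1[OF assms(1) V0] by simp
  have "card (grassmann_nbrs U (S \<union> C1)) = c"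
    using card_nbrs_in_spread_C1_of_C1[OF assms(1) V0] unfolding c_def .
  then show "card (grassmann_nbrs U C1) = c - 1"
    using S_nbrs card_grassmann_nbrs_Un[OF C1_disjoint_spread] by simp
  show "card (grassmann_nbrs U C2) = grassmann_degree CARD('a) CARD('n) - c"
    using card_nbrs_UNIV_split[of U] card_grassmann_nbrs_UNIV[of U] assms(1) C1_ksubspace
      \<open>card (grassmann_nbrs U (S \<union> C1)) = c\<close> card_grassmann_nbrs_Un[OF C1_disjoint_spread]
    by auto
qed

lemma card_nbrs_of_C2:
  assumes "U \<in> C2"
  defines "c \<equiv> (CARD('a)\<^sup>2 + CARD('a) + 1) * ((CARD('a) + 1) * (CARD('a) + 1))"
  shows "card (grassmann_nbrs U C1) = c"
    and "card (grassmann_nbrs U C2) = grassmann_degree CARD('a) CARD('n) - c"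
proof -
  show "card (grassmann_nbrs U C1) = c" using card_nbrs_in_C1_of_C2[OF assms(1)] unfolding c_def .
  then show "card (grassmann_nbrs U C2) = grassmann_degree CARD('a) CARD('n) - c"
    using card_nbrs_UNIV_split[of U] card_grassmann_nbrs_UNIV[of U] nbrs_in_spread_of_C2[OF assms(1)]
      assms(1) unfolding C2_def by simp
qed

theorem completely_regular_spread: "completely_regular (ksubspaces 3) (grassmann_adj 3) S"
proof -
  define D where "D = grassmann_degree CARD('a) CARD('n)"
  define c1 where "c1 = (num_3spaces_over_plane CARD('a) CARD('n) - 1)
    + (CARD('a)\<^sup>2 + CARD('a)) * (CARD('a) * CARD('a) + 2 * CARD('a))"
  define c2 where "c2 = (CARD('a)\<^sup>2 + CARD('a) + 1) * ((CARD('a) + 1) * (CARD('a) + 1))"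
  define \<gamma> :: "nat \<Rightarrow> nat" where "\<gamma> i = (if i = 1 then 1 else if i = 2 then c2 else 0)" for i
  define \<alpha> :: "nat \<Rightarrow> nat" where "\<alpha> i = (if i = 1 then c1 - 1 else if i = 2 then D - c2 else 0)" for i
  define \<beta> :: "nat \<Rightarrow> nat" where "\<beta> i = (if i = 0 then D else if i = 1 then D - c1 else 0)" for i
  have "card {y \<in> ksubspaces 3. grassmann_adj 3 x y \<and> 0 < i \<and> y \<in> dist_layer (i - 1)} = \<gamma> i
      \<and> card {y \<in> ksubspaces 3. grassmann_adj 3 x y \<and> y \<in> dist_layer i} = \<alpha> i
      \<and> card {y \<in> ksubspaces 3. grassmann_adj 3 x y \<and> y \<in> dist_layer (Suc i)} = \<beta> i"
    if x: "x \<in> dist_layer i" for i x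
  proof -
    have x3: "x \<in> ksubspaces 3"
      using x dist_layer_eq[of i] spread_ksubspace C1_ksubspace unfolding C2_def
      by (auto split: if_splits)
    consider "i = 0" "x \<in> S" | "i = 1" "x \<in> C1" | "i = 2" "x \<in> C2"
      using x dist_layer_eq[of i] by (auto split: if_splits)
    then show ?thesis
    proof cases
      case 1
      then show ?thesis using card_nbrs_of_spread[of x] adjacent_eq_grassmann_nbrs[OF x3]
        by (simp add: dist_layer_eq D_def \<gamma>_def \<alpha>_def \<beta>_def)
    next
      case 2
      then show ?thesis using card_nbrs_of_C1[of x] adjacent_eq_grassmann_nbrs[OF x3]
        by (simp add: dist_layer_eq D_def c1_def \<gamma>_def \<alpha>_def \<beta>_def)
    next
      case 3
      then show ?thesis using card_nbrs_of_C2[of x] adjacent_eq_grassmann_nbrs[OF x3]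
        by (simp add: dist_layer_eq D_def c2_def grassmann_nbrs_def \<gamma>_def \<alpha>_def \<beta>_def)
    qed
  qed
  then show ?thesis unfolding completely_regular_def by blast
qed

theorem covering_radius_spread:
  assumes "6 \<le> CARD('n)"
  shows "covering_radius (ksubspaces 3) (grassmann_adj 3) S = 2"
  unfolding covering_radius_def
proof (rule Greatest_equality)
  show "dist_layer 2 \<noteq> {}" using dist_layer_eq[of 2] C2_nonempty[OF assms] by simp
qed (simp add: dist_layer_eq split: if_splits)

end

theorem corollary2p2:
  fixes S :: "('a::{field,finite} ^ 'n::finite) set set"
  assumes "CARD('n) \<ge> 6" and "3 dvd CARD('n)"
    and "spread3 S"
  shows "completely_regular (ksubspaces 3) (grassmann_adj 3) S
       \<and> covering_radius (ksubspaces 3) (grassmann_adj 3) S = 2"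
proof -
  interpret spread S using assms(3) by (rule spread.intro)
  show ?thesis using completely_regular_spread covering_radius_spread[OF assms(1)] by simp
qed

end
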